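(* For every integer $n\ge 1$, $$\Phi^{(1)}[a; bq^n, b'; c; x, y] = \Phi^{(1)}[a; b, b'; c; x, y] + \frac{bx(1-a)}{1-c} \sum_{k=1}^n q^{k-1} \Phi^{(1)}[aq; bq^k, b'; cq; x, y]$$ and $$\Phi^{(1)}[a; bq^{-n}, b'; c; x, y] = \Phi^{(1)}[a; b, b'; c; x, y] - \frac{bx(1-a)}{1-c} \sum_{k=1}^n q^{-k} \Phi^{(1)}[aq; bq^{1-k}, b'; cq; x, y].$$
   Context: Let $q$ be a complex number with $0<|q|<1$. For complex $z$ and integer $m\ge 0$, $(z;q)_m=\prod_{j=0}^{m-1}(1-zq^j)$, with $(z;q)_0=1$. The $q$-Appell function $\Phi^{(1)}$ is $$\Phi^{(1)}[a; b, b'; c; x, y] = \sum_{m, n \geq 0} \frac{(a; q)_{m+n} (b; q)_m (b'; q)_n}{(q; q)_m (q; q)_n (c; q)_{m+n}} x^m y^n.$$ Identities are understood as identities of power series in $x,y$ (formal, or convergent for small $|x|,|y|$), with complex parameters chosen so that no denominator occurring vanishes. *)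

theory Defs
  imports "HOL-Analysis.Analysis"
begin

definition qpoch :: "complex \<Rightarrow> complex \<Rightarrow> nat \<Rightarrow> complex" where
  "qpoch z q m = (\<Prod>j<m. 1 - z * q ^ j)"

definition qAppell1 ::
  "complex \<Rightarrow> complex \<Rightarrow> complex \<Rightarrow> complex \<Rightarrow> complex \<Rightarrow> complex \<Rightarrow> complex \<Rightarrow> complex" where
  "qAppell1 q a b b' c x y =
     infsum (\<lambda>(m, n). qpoch a q (m + n) * qpoch b q m * qpoch b' q n
        / (qpoch q q m * qpoch q q n * qpoch c q (m + n)) * x ^ m * y ^ n) UNIV"

end

theory Submission
  imports Defs
begin

text \<open>Since (bq;q)_{m+1} - (b;q)_{m+1} = b (1 - q^{m+1}) (bq;q)_m, the series for
  Phi[a; bq, b'; c] minus the series for Phi[a; b, b'; c] vanishes at m = 0 and, after the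
  shift m + 1 \<mapsto> m, is termwise bx(1 - a)/(1 - c) times the series for Phi[aq; bq, b'; cq].
  Iterating this contiguous relation along b, bq, ..., bq^{n-1} gives the first identity, and
  along bq^{-n}, ..., bq^{-1} the second. All series converge absolutely for |x|, |y| < 1:
  (z;q)_m converges as m \<rightarrow> \<infinity>, to a nonzero limit when no factor vanishes, so the
  coefficients stay bounded.\<close>

lemma qpoch_Suc: "qpoch z q (Suc m) = qpoch z q m * (1 - z * q ^ m)"
  by (simp add: qpoch_def)

lemma qpoch_Suc_shift: "qpoch z q (Suc m) = (1 - z) * qpoch (z * q) q m"
  unfolding qpoch_def by (subst prod.lessThan_Suc_shift) (simp add: mult.assoc)

lemma qpoch_Suc_eq_prod_atMost: "qpoch z q (Suc n) = (\<Prod>j\<le>n. 1 - z * q ^ j)"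
  by (simp add: qpoch_def lessThan_Suc_atMost)

lemma qpoch_nonzero: "(\<And>j. z * q ^ j \<noteq> 1) \<Longrightarrow> qpoch z q m \<noteq> 0"
  unfolding qpoch_def by (auto simp: prod_zero_iff)

lemma mult_q_power_neq_one:
  fixes c q :: "'a :: monoid_mult"
  assumes "\<And>j. c * q ^ j \<noteq> 1"
  shows "c * q * q ^ j \<noteq> 1"
  using assms[of "Suc j"] by (simp add: mult.assoc)

lemma power_Suc_neq_one:
  fixes q :: "'a :: real_normed_div_algebra"
  assumes "norm q < 1"
  shows "q * q ^ j \<noteq> 1"
proof
  assume "q * q ^ j = 1"
  then have "norm q ^ Suc j = 1"
    by (metis norm_one norm_power power_Suc)
  moreover have "norm q ^ Suc j < 1"
    using assms by (simp add: power_less_one_iff del: power_Suc)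
  ultimately show False by simp
qed

lemma convergent_prod_qpoch_factors:
  fixes z q :: complex
  assumes "norm q < 1"
  shows "convergent_prod (\<lambda>j. 1 - z * q ^ j)"
proof -
  have "(\<lambda>j. norm ((1 - z * q ^ j) - 1)) = (\<lambda>j. norm z * norm q ^ j)"
    by (simp add: norm_mult norm_power)
  then have "summable (\<lambda>j. norm ((1 - z * q ^ j) - 1))"
    using assms by (simp add: summable_geometric)
  then show ?thesis
    by (intro abs_convergent_prod_imp_convergent_prod summable_imp_abs_convergent_prod)
qed

lemma Bseq_qpoch:
  assumes "norm q < 1"
  shows "Bseq (\<lambda>m. qpoch z q m)"
proof -
  have "convergent (\<lambda>n. qpoch z q (Suc n))"
    unfolding qpoch_Suc_eq_prod_atMost
    using convergent_prod_imp_convergent[OF convergent_prod_qpoch_factors[OF assms]] .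
  then have "convergent (qpoch z q)"
    using convergent_Suc_iff by blast
  then show ?thesis
    by (rule convergent_imp_Bseq)
qed

lemma Bseq_inverse_qpoch:
  assumes "norm q < 1" and "\<And>j. z * q ^ j \<noteq> 1"
  shows "Bseq (\<lambda>m. inverse (qpoch z q m))"
proof -
  have "1 - z * q ^ j \<noteq> 0" for j
    using assms(2) by simp
  from convergent_prod_iff_nz_lim[OF this, THEN iffD1, OF convergent_prod_qpoch_factors[OF assms(1)]]
  obtain L where "(\<lambda>n. qpoch z q (Suc n)) \<longlonglongrightarrow> L" "L \<noteq> 0"
    unfolding qpoch_Suc_eq_prod_atMost by blast
  then have "qpoch z q \<longlonglongrightarrow> L"
    using filterlim_sequentially_Suc[of "qpoch z q"] by blast
  then show ?thesis
    using \<open>L \<noteq> 0\<close> by (rule Bfun_inverse)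
qed

lemma summable_on_power_mult_power:
  fixes u v :: real
  assumes "0 \<le> u" "u < 1" "0 \<le> v" "v < 1"
  shows "(\<lambda>(m, n). u ^ m * v ^ n) summable_on UNIV"
proof -
  have "(\<lambda>(m, n). u ^ m * v ^ n) summable_on Sigma UNIV (\<lambda>_. UNIV)"
  proof (rule summable_on_SigmaI)
    fix m :: nat
    have "(\<lambda>n. u ^ m * v ^ n) sums (u ^ m * (1 / (1 - v)))"
      by (intro sums_mult geometric_sums) (use assms in auto)
    then show "((\<lambda>n. (\<lambda>(m, n). u ^ m * v ^ n) (m, n)) has_sum (u ^ m / (1 - v))) UNIV"
      by (intro sums_nonneg_imp_has_sum) (use assms in auto)
  next
    have "summable (\<lambda>m. u ^ m / (1 - v))"
      by (intro summable_divide summable_geometric) (use assms in auto)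
    then show "(\<lambda>m. u ^ m / (1 - v)) summable_on UNIV"
      by (subst summable_on_UNIV_nonneg_real_iff) (use assms in auto)
  qed (use assms in auto)
  then show ?thesis by simp
qed

lemma bounded_double_power_series_summable:
  fixes f :: "nat \<Rightarrow> nat \<Rightarrow> 'a :: {banach, real_normed_div_algebra}"
  assumes "\<And>m n. norm (f m n) \<le> C" and "norm x < 1" and "norm y < 1"
  shows "(\<lambda>(m, n). f m n * x ^ m * y ^ n) summable_on UNIV"
proof -
  let ?g = "\<lambda>(m, n). f m n * x ^ m * y ^ n" and ?G = "\<lambda>(m, n). C * (norm x ^ m * norm y ^ n)"
  have G: "?G summable_on UNIV"
    using summable_on_power_mult_power[of "norm x" "norm y"] assms(2,3)
    by (simp add: case_prod_unfold summable_on_cmult_right)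
  have bound: "norm (?g p) \<le> ?G p" for p
    using assms(1) by (cases p) (auto simp: norm_mult norm_power mult.assoc intro!: mult_right_mono)
  have "(\<lambda>p. norm (?g p)) summable_on UNIV"
    using bound by (intro Infinite_Sum.abs_summable_on_comparison_test'[OF G])
  then show ?thesis
    by (rule abs_summable_summable)
qed

definition qAppell1_term ::
  "complex \<Rightarrow> complex \<Rightarrow> complex \<Rightarrow> complex \<Rightarrow> complex \<Rightarrow> complex \<Rightarrow> complex \<Rightarrow> nat \<times> nat \<Rightarrow> complex"
where
  "qAppell1_term q a b b' c x y = (\<lambda>(m, n). qpoch a q (m + n) * qpoch b q m * qpoch b' q n
     / (qpoch q q m * qpoch q q n * qpoch c q (m + n)) * x ^ m * y ^ n)"

lemma has_sum_qAppell1: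
  assumes q: "norm q < 1" and c: "\<And>j. c * q ^ j \<noteq> 1" and "norm x < 1" "norm y < 1"
  shows "(qAppell1_term q a b b' c x y has_sum qAppell1 q a b b' c x y) UNIV"
proof -
  obtain Ma Mb Mb' Iq Ic where "Ma > 0" "Mb > 0" "Mb' > 0" "Iq > 0" "Ic > 0" and
    "\<And>m. norm (qpoch a q m) \<le> Ma" "\<And>m. norm (qpoch b q m) \<le> Mb" "\<And>m. norm (qpoch b' q m) \<le> Mb'"
    "\<And>m. norm (inverse (qpoch q q m)) \<le> Iq" "\<And>m. norm (inverse (qpoch c q m)) \<le> Ic"
    using Bseq_qpoch[OF q] Bseq_inverse_qpoch[OF q power_Suc_neq_one[OF q]] Bseq_inverse_qpoch[OF q c]
    unfolding Bseq_def by meson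
  then have "norm (qpoch a q (m + n) * qpoch b q m * qpoch b' q n
      / (qpoch q q m * qpoch q q n * qpoch c q (m + n))) \<le> Ma * Mb * Mb' * (Iq * Iq * Ic)" for m n
    unfolding divide_inverse inverse_mult_distrib norm_mult
    by (intro mult_mono) (simp_all add: less_imp_le)
  then have "qAppell1_term q a b b' c x y summable_on UNIV"
    unfolding qAppell1_term_def
    by (rule bounded_double_power_series_summable) (use assms in auto)
  then show ?thesis
    unfolding qAppell1_def qAppell1_term_def by (rule has_sum_infsum)
qed

lemma qpoch_mult_q_Suc_diff:
  "qpoch (b * q) q (Suc m) - qpoch b q (Suc m) = b * (1 - q * q ^ m) * qpoch (b * q) q m"
  by (simp add: qpoch_Suc[of "b * q"] qpoch_Suc_shift[of b] algebra_simps)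

lemma qAppell1_term_Suc_diff:
  assumes q: "norm q < 1" and c: "\<And>j. c * q ^ j \<noteq> 1"
  shows "qAppell1_term q a (b * q) b' c x y (Suc m, n) - qAppell1_term q a b b' c x y (Suc m, n)
       = b * x * (1 - a) / (1 - c) * qAppell1_term q (a * q) (b * q) b' (c * q) x y (m, n)"
proof -
  have nz: "1 - c \<noteq> 0" "1 - q * q ^ m \<noteq> 0" "qpoch q q m \<noteq> 0" "qpoch q q n \<noteq> 0"
    "qpoch (c * q) q (m + n) \<noteq> 0"
    using c[of 0] power_Suc_neq_one[OF q] qpoch_nonzero[OF power_Suc_neq_one[OF q]]
      qpoch_nonzero[OF mult_q_power_neq_one[OF c]]
    by auto
  have "qAppell1_term q a (b * q) b' c x y (Suc m, n) - qAppell1_term q a b b' c x y (Suc m, n)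
      = (qpoch (b * q) q (Suc m) - qpoch b q (Suc m)) * qpoch a q (Suc (m + n)) * qpoch b' q n
        / (qpoch q q (Suc m) * qpoch q q n * qpoch c q (Suc (m + n))) * x ^ Suc m * y ^ n"
    by (simp add: qAppell1_term_def diff_divide_distrib algebra_simps)
  also have "\<dots> = b * x * (1 - a) / (1 - c) * qAppell1_term q (a * q) (b * q) b' (c * q) x y (m, n)"
    unfolding qpoch_mult_q_Suc_diff qpoch_Suc[of q q m] qpoch_Suc_shift[of a] qpoch_Suc_shift[of c]
    using nz unfolding qAppell1_term_def split by (simp add: divide_simps mult_ac)
  finally show ?thesis .
qed

lemma has_sum_Suc_fst:
  assumes "((\<lambda>(m, n). f (Suc m, n)) has_sum s) UNIV" and "\<And>n. f (0, n) = 0"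
  shows "(f has_sum s) UNIV"
proof -
  define h :: "nat \<times> 'a \<Rightarrow> nat \<times> 'a" where "h = (\<lambda>(m, n). (Suc m, n))"
  have "inj h"
    by (auto simp: h_def inj_def)
  moreover have "((f \<circ> h) has_sum s) UNIV"
    using assms(1) by (simp add: h_def comp_def case_prod_unfold)
  ultimately have "(f has_sum s) (range h)"
    by (simp add: has_sum_reindex)
  moreover have "f p = 0" if "p \<in> UNIV - range h" for p
  proof (cases p)
    case (Pair m n)
    with that have "m = 0"
      by (cases m) (auto simp: h_def)
    with Pair show ?thesis
      using assms(2) by simp
  qed
  ultimately show ?thesis
    using has_sum_cong_neutral[of "range h" UNIV f f] by blast
qed

lemma qAppell1_contiguous:
  assumes q: "norm q < 1" and c: "\<And>j. c * q ^ j \<noteq> 1" and x: "norm x < 1" and y: "norm y < 1"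
  shows "qAppell1 q a (b * q) b' c x y = qAppell1 q a b b' c x y
           + b * x * (1 - a) / (1 - c) * qAppell1 q (a * q) (b * q) b' (c * q) x y"
proof -
  let ?K = "b * x * (1 - a) / (1 - c)"
  have "((\<lambda>p. qAppell1_term q a (b * q) b' c x y p - qAppell1_term q a b b' c x y p)
      has_sum ?K * qAppell1 q (a * q) (b * q) b' (c * q) x y) UNIV"
  proof (rule has_sum_Suc_fst)
    show "((\<lambda>(m, n). qAppell1_term q a (b * q) b' c x y (Suc m, n) - qAppell1_term q a b b' c x y (Suc m, n))
        has_sum ?K * qAppell1 q (a * q) (b * q) b' (c * q) x y) UNIV"
      using has_sum_cmult_right[OF has_sum_qAppell1[OF q mult_q_power_neq_one[OF c] x y, of "a * q" "b * q" b'], of ?K]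
      by (simp add: qAppell1_term_Suc_diff[OF q c] case_prod_unfold)
  qed (simp add: qAppell1_term_def qpoch_def)
  from has_sum_add[OF has_sum_qAppell1[OF q c x y, of a b b'] this]
  have "(qAppell1_term q a (b * q) b' c x y has_sum
      qAppell1 q a b b' c x y + ?K * qAppell1 q (a * q) (b * q) b' (c * q) x y) UNIV"
    by simp
  then show ?thesis
    by (rule has_sum_unique[OF has_sum_qAppell1[OF q c x y]])
qed

lemma qAppell1_b_mult_power:
  assumes q: "norm q < 1" and c: "\<And>j. c * q ^ j \<noteq> 1" and x: "norm x < 1" and y: "norm y < 1"
  shows "qAppell1 q a (b * q ^ n) b' c x y
           = qAppell1 q a b b' c x y
             + b * x * (1 - a) / (1 - c)
               * (\<Sum>k=1..n. q ^ (k - 1) * qAppell1 q (a * q) (b * q ^ k) b' (c * q) x y)"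
proof (induction n)
  case 0
  show ?case by simp
next
  case (Suc n)
  have "qAppell1 q a (b * q ^ Suc n) b' c x y = qAppell1 q a (b * q ^ n) b' c x y
      + b * q ^ n * x * (1 - a) / (1 - c) * qAppell1 q (a * q) (b * q ^ Suc n) b' (c * q) x y"
    using qAppell1_contiguous[OF q c x y, of a "b * q ^ n" b'] by (simp add: mult_ac)
  with Suc.IH show ?case
    by (simp add: algebra_simps)
qed

lemma qAppell1_b_mult_neg_power:
  assumes "q \<noteq> 0"
    and q: "norm q < 1" and c: "\<And>j. c * q ^ j \<noteq> 1" and x: "norm x < 1" and y: "norm y < 1"
  shows "qAppell1 q a (b * q powi (- int n)) b' c x y
           = qAppell1 q a b b' c x y
             - b * x * (1 - a) / (1 - c)
               * (\<Sum>k=1..n. q powi (- int k) * qAppell1 q (a * q) (b * q powi (1 - int k)) b' (c * q) x y)"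
proof (induction n)
  case 0
  show ?case by simp
next
  case (Suc n)
  let ?b = "b * q powi (- int (Suc n))"
  have shift: "?b * q = b * q powi (- int n)"
    using power_int_add[of q "- int (Suc n)" 1] \<open>q \<noteq> 0\<close> by (simp add: mult.assoc)
  have "qAppell1 q a (b * q powi (- int n)) b' c x y = qAppell1 q a ?b b' c x y
      + ?b * x * (1 - a) / (1 - c) * qAppell1 q (a * q) (b * q powi (- int n)) b' (c * q) x y"
    using qAppell1_contiguous[OF q c x y, of a ?b b'] unfolding shift .
  with Suc.IH show ?case
    by (simp add: algebra_simps)
qed

theorem theorem3:
  fixes q a b b' c x y :: complex and n :: nat
  assumes "0 < norm q" "norm q < 1"
    and "\<And>j::nat. c * q ^ j \<noteq> 1"
    and "norm x < 1" "norm y < 1"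
    and "n \<ge> 1"
  shows "qAppell1 q a (b * q ^ n) b' c x y
           = qAppell1 q a b b' c x y
             + b * x * (1 - a) / (1 - c)
               * (\<Sum>k=1..n. q ^ (k - 1) * qAppell1 q (a * q) (b * q ^ k) b' (c * q) x y)
       \<and> qAppell1 q a (b * q powi (- int n)) b' c x y
           = qAppell1 q a b b' c x y
             - b * x * (1 - a) / (1 - c)
               * (\<Sum>k=1..n. q powi (- int k) * qAppell1 q (a * q) (b * q powi (1 - int k)) b' (c * q) x y)"
  using qAppell1_b_mult_power[OF assms(2-5)] qAppell1_b_mult_neg_power[OF _ assms(2-5)] assms(1)
  by auto

end
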